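(* Let $\mathcal N=(G,\beta,r)$ be a potential-based flow network with $G=(V,A)$, and let $s,t\in V$ be distinct. Suppose there exists a potential-based $(s,t)$-flow of value $d>0$ in $\mathcal N$ with potentials $\pi\in[0,\bar\pi]^V$, where $\bar\pi>0$. Then for every integer $k\ge1$ and all $k$ disjoint $(s,t)$-cuts $S_1\subseteq\dots\subseteq S_k\subseteq V$, $$\frac{1}{k\sqrt[r]{k}}\sum_{i=1}^k\sum_{a\in\delta(S_i)}\mu_a\geq\frac{d}{\sqrt[r]{\bar\pi}}.$$
   Context: A potential-based flow network $\mathcal N=(G,\beta,r)$ consists of a weakly connected directed multigraph $G=(V,A)$ without loops, resistances $\beta\in\mathbb{R}^A_{>0}$ and a degree $r>0$; the conductance of arc $a$ is $\mu_a=\beta_a^{-1/r}$. A potential-based $(s,t)$-flow of value $d$ is a pair $(\pi,f)\in\mathbb{R}^V\times\mathbb{R}^A$ with $\pi_u-\pi_v=\beta_a\,\mathrm{sign}(f_a)|f_a|^r$ for every arc $a=(u,v)$ and $\sum_{a\in\delta^+(v)}f_a-\sum_{a\in\delta^-(v)}f_a=b_v$ for all $v\in V$, where $b=d(\chi_s-\chi_t)$, $\chi_v$ the unit vector of $v$, and $\delta^+(v)$, $\delta^-(v)$ are the arcs leaving, resp. entering, $v$. For $S\subseteq V$, $\delta(S)$ is the set of arcs with one endpoint in $S$ and the other in $V\setminus S$ (either direction). An $(s,t)$-cut is a set $S\subseteq V$ with $s\in S$, $t\notin S$. Sets $S_1,\dots,S_k$ are $k$ disjoint $(s,t)$-cuts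 if each is an $(s,t)$-cut and $\delta(S_i)\cap\delta(S_j)=\emptyset$ for all $i\ne j$. *)

theory Defs
  imports Complex_Main
begin

text \<open>A directed multigraph G = (V, A): arcs form an abstract set A with
  tail and head maps tail, head (parallel arcs allowed).\<close>

definition pb_network ::
  "'v set \<Rightarrow> 'a set \<Rightarrow> ('a \<Rightarrow> 'v) \<Rightarrow> ('a \<Rightarrow> 'v) \<Rightarrow> ('a \<Rightarrow> real) \<Rightarrow> real \<Rightarrow> bool" where
  "pb_network V A tail head \<beta> r \<longleftrightarrow>
     finite V \<and> finite A \<and>
     (\<forall>a\<in>A. tail a \<in> V \<and> head a \<in> V \<and> tail a \<noteq> head a) \<and>
     (\<forall>a\<in>A. \<beta> a > 0) \<and> r > 0 \<and>
     (\<forall>u\<in>V. \<forall>v\<in>V. (u, v) \<in>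
        ({(tail a, head a) | a. a \<in> A} \<union> {(head a, tail a) | a. a \<in> A})\<^sup>*)"

definition conductance :: "('a \<Rightarrow> real) \<Rightarrow> real \<Rightarrow> 'a \<Rightarrow> real" where
  "conductance \<beta> r a = \<beta> a powr (- 1 / r)"

definition pb_flow ::
  "'v set \<Rightarrow> 'a set \<Rightarrow> ('a \<Rightarrow> 'v) \<Rightarrow> ('a \<Rightarrow> 'v) \<Rightarrow> ('a \<Rightarrow> real) \<Rightarrow> real \<Rightarrow>
   'v \<Rightarrow> 'v \<Rightarrow> real \<Rightarrow> ('v \<Rightarrow> real) \<Rightarrow> ('a \<Rightarrow> real) \<Rightarrow> bool" where
  "pb_flow V A tail head \<beta> r s t d \<pi> f \<longleftrightarrow>
     (\<forall>a\<in>A. \<pi> (tail a) - \<pi> (head a) = \<beta> a * sgn (f a) * \<bar>f a\<bar> powr r) \<and>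
     (\<forall>v\<in>V. (\<Sum>a\<in>{a\<in>A. tail a = v}. f a) - (\<Sum>a\<in>{a\<in>A. head a = v}. f a)
            = d * ((if v = s then 1 else 0) - (if v = t then 1 else 0)))"

definition cut_arcs :: "'v set \<Rightarrow> 'a set \<Rightarrow> ('a \<Rightarrow> 'v) \<Rightarrow> ('a \<Rightarrow> 'v) \<Rightarrow> 'v set \<Rightarrow> 'a set" where
  "cut_arcs V A tail head S =
     {a\<in>A. (tail a \<in> S \<and> head a \<in> V - S) \<or> (head a \<in> S \<and> tail a \<in> V - S)}"

definition st_cut :: "'v set \<Rightarrow> 'v \<Rightarrow> 'v \<Rightarrow> 'v set \<Rightarrow> bool" where
  "st_cut V s t S \<longleftrightarrow> S \<subseteq> V \<and> s \<in> S \<and> t \<notin> S"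

end

theory Submission
  imports Defs "HOL-Analysis.Convex"
begin

text \<open>Summing the conservation law against any potential \<open>\<phi>\<close> gives
  \<open>\<Sum>\<^sub>a f a * (\<phi> (tail a) - \<phi> (head a)) = d * (\<phi> s - \<phi> t)\<close>. For the indicator of a
  cut this says that each cut carries at least \<open>d\<close> units of \<open>|f|\<close>, so the \<open>k\<close> disjoint
  cuts together carry at least \<open>k d\<close>; for \<open>\<phi> = \<pi>\<close> it bounds the energy
  \<open>\<Sum>\<^sub>a \<beta> a * |f a| powr (r + 1)\<close> by \<open>d \<pi>bar\<close>. The weighted Young inequality
  \<open>(r + 1) x \<le> r c \<mu>\<^sub>a + \<beta>\<^sub>a x powr (r + 1) / c powr r\<close>, summed over the cut arcs with
  \<open>c = (\<pi>bar / k) powr (1 / r)\<close>, then trades flow for conductance.\<close>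

definition net_outflow :: "'a set \<Rightarrow> ('a \<Rightarrow> 'v) \<Rightarrow> ('a \<Rightarrow> 'v) \<Rightarrow> ('a \<Rightarrow> real) \<Rightarrow> 'v \<Rightarrow> real" where
  "net_outflow A tail head f v =
     (\<Sum>a\<in>{a\<in>A. tail a = v}. f a) - (\<Sum>a\<in>{a\<in>A. head a = v}. f a)"

lemma sum_mult_fibres:
  fixes f :: "'a \<Rightarrow> real"
  assumes "finite A" "finite V" "g ` A \<subseteq> V"
  shows "(\<Sum>v\<in>V. \<phi> v * (\<Sum>a\<in>{a\<in>A. g a = v}. f a)) = (\<Sum>a\<in>A. f a * \<phi> (g a))"
proof -
  have "(\<Sum>v\<in>V. \<phi> v * (\<Sum>a\<in>{a\<in>A. g a = v}. f a)) = (\<Sum>v\<in>V. \<Sum>a\<in>{a\<in>A. g a = v}. f a * \<phi> (g a))"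
    by (auto simp: sum_distrib_left mult.commute intro!: sum.cong)
  also have "\<dots> = (\<Sum>a\<in>A. f a * \<phi> (g a))"
    using assms by (rule sum.group)
  finally show ?thesis .
qed

lemma sum_mult_net_outflow:
  assumes "finite A" "finite V" "\<forall>a\<in>A. tail a \<in> V \<and> head a \<in> V"
  shows "(\<Sum>v\<in>V. \<phi> v * net_outflow A tail head f v) = (\<Sum>a\<in>A. f a * (\<phi> (tail a) - \<phi> (head a)))"
proof -
  have "tail ` A \<subseteq> V" "head ` A \<subseteq> V"
    using assms(3) by auto
  then show ?thesis
    using sum_mult_fibres[of A V tail \<phi> f] sum_mult_fibres[of A V head \<phi> f] assms(1,2)
    by (simp add: net_outflow_def right_diff_distrib sum_subtractf)
qed

lemma pb_flow_sum_mult_potential_drop: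
  assumes net: "pb_network V A tail head \<beta> r"
    and flow: "pb_flow V A tail head \<beta> r s t d \<pi> f"
    and "s \<in> V" "t \<in> V"
  shows "(\<Sum>a\<in>A. f a * (\<phi> (tail a) - \<phi> (head a))) = d * (\<phi> s - \<phi> t)"
proof -
  have fin: "finite A" "finite V" and ends: "\<forall>a\<in>A. tail a \<in> V \<and> head a \<in> V"
    using net by (auto simp: pb_network_def)
  have cons: "net_outflow A tail head f v = (if v = s then d else 0) - (if v = t then d else 0)"
    if "v \<in> V" for v
    using flow that by (simp add: pb_flow_def net_outflow_def)
  have "(\<Sum>a\<in>A. f a * (\<phi> (tail a) - \<phi> (head a))) = (\<Sum>v\<in>V. \<phi> v * net_outflow A tail head f v)"
    using sum_mult_net_outflow[OF fin ends] by simp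
  also have "\<dots> = (\<Sum>v\<in>V. (if v = s then d * \<phi> v else 0) - (if v = t then d * \<phi> v else 0))"
    using cons by (intro sum.cong) (simp_all add: right_diff_distrib mult.commute)
  also have "\<dots> = d * (\<phi> s - \<phi> t)"
    using fin assms(3,4) by (simp add: sum_subtractf right_diff_distrib)
  finally show ?thesis .
qed

lemma pb_flow_value_le_cut:
  assumes net: "pb_network V A tail head \<beta> r"
    and flow: "pb_flow V A tail head \<beta> r s t d \<pi> f"
    and cut: "st_cut V s t S" and "t \<in> V"
  shows "d \<le> (\<Sum>a\<in>cut_arcs V A tail head S. \<bar>f a\<bar>)"
proof -
  define \<phi> where "\<phi> v = (if v \<in> S then 1 else 0 :: real)" for v
  have fin: "finite A" and ends: "\<forall>a\<in>A. tail a \<in> V \<and> head a \<in> V"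
    using net by (auto simp: pb_network_def)
  have "d = d * (\<phi> s - \<phi> t)"
    using cut by (simp add: \<phi>_def st_cut_def)
  also have "\<dots> = (\<Sum>a\<in>A. f a * (\<phi> (tail a) - \<phi> (head a)))"
    using pb_flow_sum_mult_potential_drop[OF net flow] cut \<open>t \<in> V\<close> by (auto simp: st_cut_def)
  also have "\<dots> \<le> (\<Sum>a\<in>A. if a \<in> cut_arcs V A tail head S then \<bar>f a\<bar> else 0)"
    using ends by (intro sum_mono) (auto simp: \<phi>_def cut_arcs_def)
  also have "\<dots> = (\<Sum>a\<in>cut_arcs V A tail head S. \<bar>f a\<bar>)"
    using fin by (simp add: sum.inter_filter[symmetric] cut_arcs_def)
  finally show ?thesis .
qed

lemma pb_flow_value_le_disjoint_cuts:
  assumes net: "pb_network V A tail head \<beta> r"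
    and flow: "pb_flow V A tail head \<beta> r s t d \<pi> f"
    and "t \<in> V" "finite I" "\<forall>i\<in>I. st_cut V s t (S i)"
    and disj: "\<forall>i\<in>I. \<forall>j\<in>I. i \<noteq> j \<longrightarrow>
                 cut_arcs V A tail head (S i) \<inter> cut_arcs V A tail head (S j) = {}"
  shows "real (card I) * d \<le> (\<Sum>a\<in>(\<Union>i\<in>I. cut_arcs V A tail head (S i)). \<bar>f a\<bar>)"
proof -
  have "finite (cut_arcs V A tail head (S i))" for i
    using net by (auto simp: pb_network_def cut_arcs_def)
  then have "(\<Sum>a\<in>(\<Union>i\<in>I. cut_arcs V A tail head (S i)). \<bar>f a\<bar>)
      = (\<Sum>i\<in>I. \<Sum>a\<in>cut_arcs V A tail head (S i). \<bar>f a\<bar>)"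
    using disj \<open>finite I\<close> by (intro sum.UNION_disjoint) auto
  moreover have "real (card I) * d \<le> (\<Sum>i\<in>I. \<Sum>a\<in>cut_arcs V A tail head (S i). \<bar>f a\<bar>)"
    using sum_mono[of I "\<lambda>_. d"] pb_flow_value_le_cut[OF net flow _ \<open>t \<in> V\<close>] assms(5) by simp
  ultimately show ?thesis
    by simp
qed

lemma pb_flow_energy:
  assumes net: "pb_network V A tail head \<beta> r"
    and flow: "pb_flow V A tail head \<beta> r s t d \<pi> f"
    and "s \<in> V" "t \<in> V"
  shows "(\<Sum>a\<in>A. \<beta> a * \<bar>f a\<bar> powr (r + 1)) = d * (\<pi> s - \<pi> t)"
proof -
  have "f a * (\<pi> (tail a) - \<pi> (head a)) = \<beta> a * \<bar>f a\<bar> powr (r + 1)" if "a \<in> A" for a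
  proof -
    have "f a * (\<pi> (tail a) - \<pi> (head a)) = \<beta> a * (sgn (f a) * f a) * \<bar>f a\<bar> powr r"
      using flow that by (simp add: pb_flow_def mult_ac)
    also have "\<dots> = \<beta> a * \<bar>f a\<bar> powr (r + 1)"
      by (cases "f a = 0") (auto simp: sgn_mult_self_eq abs_mult_sgn powr_add sgn_if)
    finally show ?thesis .
  qed
  then show ?thesis
    using pb_flow_sum_mult_potential_drop[OF assms, of \<pi>] by simp
qed

lemma pb_flow_energy_le:
  assumes net: "pb_network V A tail head \<beta> r"
    and flow: "pb_flow V A tail head \<beta> r s t d \<pi> f"
    and "s \<in> V" "t \<in> V" "d \<ge> 0" "\<forall>v\<in>V. 0 \<le> \<pi> v \<and> \<pi> v \<le> \<pi>bar" "B \<subseteq> A"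
  shows "(\<Sum>a\<in>B. \<beta> a * \<bar>f a\<bar> powr (r + 1)) \<le> d * \<pi>bar"
proof -
  have "(\<Sum>a\<in>B. \<beta> a * \<bar>f a\<bar> powr (r + 1)) \<le> (\<Sum>a\<in>A. \<beta> a * \<bar>f a\<bar> powr (r + 1))"
    using net \<open>B \<subseteq> A\<close> by (intro sum_mono2) (auto simp: pb_network_def less_imp_le)
  also have "\<dots> = d * (\<pi> s - \<pi> t)"
    using pb_flow_energy[OF net flow assms(3,4)] .
  also have "\<dots> \<le> d * \<pi>bar"
  proof -
    have "\<pi> s \<le> \<pi>bar" "0 \<le> \<pi> t"
      using assms(3,4,6) by auto
    with \<open>d \<ge> 0\<close> show ?thesis
      by (intro mult_left_mono) auto
  qed
  finally show ?thesis .
qed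

lemma Bernoulli_inequality_powr:
  fixes p t :: real
  assumes "p \<ge> 1" "t \<ge> 0"
  shows "p * t \<le> p - 1 + t powr p"
proof (cases "t = 0")
  case True
  with assms show ?thesis by simp
next
  case False
  have "1 powr ((p - 1) / p) * (t powr p) powr (1 / p) \<le> (p - 1) / p * 1 + 1 / p * t powr p"
    by (rule Youngs_inequality_0) (use assms False in \<open>auto simp: field_simps\<close>)
  moreover have "(t powr p) powr (1 / p) = t"
    using assms by (simp add: powr_powr)
  ultimately have "t \<le> (p - 1 + t powr p) / p"
    by (simp add: add_divide_distrib)
  with assms show ?thesis
    by (simp add: pos_le_divide_eq mult.commute)
qed

text \<open>Bernoulli's inequality at \<open>x / (c * \<beta> powr (-1 / r))\<close>. Equality holds when
  \<open>x = c * \<beta> powr (-1 / r)\<close>, the flow through an arc of resistance \<open>\<beta>\<close> at potential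
  drop \<open>c powr r\<close>.\<close>

lemma le_conductance_plus_energy:
  fixes \<beta> r c x :: real
  assumes "\<beta> > 0" "r > 0" "c > 0" "x \<ge> 0"
  shows "(r + 1) * x \<le> r * c * \<beta> powr (-1 / r) + \<beta> * x powr (r + 1) / c powr r"
proof -
  define m where "m = \<beta> powr (-1 / r)"
  have m: "m > 0"
    using assms by (simp add: m_def)
  have mr: "m powr r = 1 / \<beta>"
    unfolding m_def powr_powr using assms by (simp add: powr_minus_divide)
  have "(r + 1) * (x / (m * c)) \<le> r + (x / (m * c)) powr (r + 1)"
    using Bernoulli_inequality_powr[of "r + 1" "x / (m * c)"] assms m by simp
  then have "m * c * ((r + 1) * (x / (m * c))) \<le> m * c * (r + (x / (m * c)) powr (r + 1))"
    using m assms by (intro mult_left_mono) auto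
  moreover have "m * c * ((r + 1) * (x / (m * c))) = (r + 1) * x"
    using m assms by simp
  moreover have "(x / (m * c)) powr (r + 1) = x powr (r + 1) / (m * c * (m powr r * c powr r))"
    using m assms by (simp add: powr_divide powr_add powr_mult)
  moreover have "m * c * (r + x powr (r + 1) / (m * c * (m powr r * c powr r)))
      = r * c * m + \<beta> * x powr (r + 1) / c powr r"
    using m assms mr by (simp add: field_simps)
  ultimately show ?thesis
    by (simp add: m_def)
qed

lemma sum_conductance_lower_bound:
  fixes U :: "'a set" and \<beta> x :: "'a \<Rightarrow> real" and r k d \<pi>bar :: real
  assumes "finite U" "\<forall>a\<in>U. \<beta> a > 0" "r > 0" "k > 0" "\<pi>bar > 0"
    and flow: "k * d \<le> (\<Sum>a\<in>U. \<bar>x a\<bar>)"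
    and energy: "(\<Sum>a\<in>U. \<beta> a * \<bar>x a\<bar> powr (r + 1)) \<le> d * \<pi>bar"
  shows "1 / (k * k powr (1 / r)) * (\<Sum>a\<in>U. conductance \<beta> r a) \<ge> d / \<pi>bar powr (1 / r)"
proof -
  define M where "M = (\<Sum>a\<in>U. conductance \<beta> r a)"
  define c where "c = (\<pi>bar / k) powr (1 / r)"
  have c: "c > 0" "c powr r = \<pi>bar / k"
    using assms by (simp_all add: c_def powr_powr)
  have "(r + 1) * (\<Sum>a\<in>U. \<bar>x a\<bar>)
      \<le> (\<Sum>a\<in>U. r * c * conductance \<beta> r a + \<beta> a * \<bar>x a\<bar> powr (r + 1) / c powr r)"
    unfolding sum_distrib_left conductance_def
    by (intro sum_mono le_conductance_plus_energy) (use assms c in auto)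
  also have "\<dots> = r * c * M + (\<Sum>a\<in>U. \<beta> a * \<bar>x a\<bar> powr (r + 1)) / c powr r"
    by (simp add: M_def sum.distrib sum_distrib_left sum_divide_distrib)
  also have "\<dots> \<le> r * c * M + k * d"
    using energy assms c by (simp add: divide_right_mono field_simps)
  finally have "(r + 1) * (k * d) \<le> r * c * M + k * d"
    using flow \<open>r > 0\<close> by (smt (verit) mult_left_mono)
  then have "k * d \<le> c * M"
    using \<open>r > 0\<close> by (simp add: algebra_simps)
  moreover have "c = \<pi>bar powr (1 / r) / k powr (1 / r)"
    using assms by (simp add: c_def powr_divide)
  ultimately show ?thesis
    using assms by (simp add: M_def field_simps)
qed

theorem theorem3:
  fixes V :: "'v set" and A :: "'a set" and tail head :: "'a \<Rightarrow> 'v"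
    and \<beta> :: "'a \<Rightarrow> real" and r d \<pi>bar :: real and s t :: 'v
    and \<pi> :: "'v \<Rightarrow> real" and f :: "'a \<Rightarrow> real"
  assumes net: "pb_network V A tail head \<beta> r"
    and st: "s \<in> V" "t \<in> V" "s \<noteq> t"
    and flow: "pb_flow V A tail head \<beta> r s t d \<pi> f"
    and dpos: "d > 0"
    and pibar: "\<pi>bar > 0"
    and pot: "\<forall>v\<in>V. 0 \<le> \<pi> v \<and> \<pi> v \<le> \<pi>bar"
  shows "\<forall>(k::nat) (S :: nat \<Rightarrow> 'v set). k \<ge> 1 \<longrightarrow>
           (\<forall>i\<in>{1..k}. st_cut V s t (S i)) \<longrightarrow>
           (\<forall>i\<in>{1..k}. \<forall>j\<in>{1..k}. i \<noteq> j \<longrightarrow>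
               cut_arcs V A tail head (S i) \<inter> cut_arcs V A tail head (S j) = {}) \<longrightarrow>
           (\<forall>i\<in>{1..<k}. S i \<subseteq> S (Suc i)) \<longrightarrow>
           1 / (real k * real k powr (1 / r)) *
             (\<Sum>i=1..k. \<Sum>a\<in>cut_arcs V A tail head (S i). conductance \<beta> r a)
           \<ge> d / \<pi>bar powr (1 / r)"
proof (intro allI impI)
  fix k :: nat and S :: "nat \<Rightarrow> 'v set"
  assume "k \<ge> 1" and cuts: "\<forall>i\<in>{1..k}. st_cut V s t (S i)"
    and disj: "\<forall>i\<in>{1..k}. \<forall>j\<in>{1..k}. i \<noteq> j \<longrightarrow>
               cut_arcs V A tail head (S i) \<inter> cut_arcs V A tail head (S j) = {}"
  define U where "U = (\<Union>i\<in>{1..k}. cut_arcs V A tail head (S i))"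
  have flow_U: "real k * d \<le> (\<Sum>a\<in>U. \<bar>f a\<bar>)"
    using pb_flow_value_le_disjoint_cuts[OF net flow st(2) _ cuts disj] by (simp add: U_def)
  have "U \<subseteq> A" "finite A" "\<forall>a\<in>A. \<beta> a > 0" "r > 0"
    using net by (auto simp: U_def pb_network_def cut_arcs_def)
  then have "finite U" "\<forall>a\<in>U. \<beta> a > 0"
    using finite_subset by blast+
  have sum_U: "(\<Sum>i=1..k. \<Sum>a\<in>cut_arcs V A tail head (S i). g a) = (\<Sum>a\<in>U. g a)" for g
    unfolding U_def using disj \<open>U \<subseteq> A\<close> \<open>finite U\<close>
    by (subst sum.UNION_disjoint) (auto simp: U_def intro: finite_subset)
  show "1 / (real k * real k powr (1 / r)) *
      (\<Sum>i=1..k. \<Sum>a\<in>cut_arcs V A tail head (S i). conductance \<beta> r a) \<ge> d / \<pi>bar powr (1 / r)"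
    unfolding sum_U
    using sum_conductance_lower_bound[OF \<open>finite U\<close> _ \<open>r > 0\<close> _ pibar flow_U
        pb_flow_energy_le[OF net flow st(1,2) _ pot \<open>U \<subseteq> A\<close>]] dpos \<open>k \<ge> 1\<close> \<open>\<forall>a\<in>U. \<beta> a > 0\<close>
    by simp
qed

end
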